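(* For every nonempty team $X$ on a set $\{p_1,\dots,p_n\}$ of propositional variables, the formula $\Theta_X=\bigotimes_{v\in X}(p_1^{v(p_1)}\wedge\dots\wedge p_n^{v(p_n)})$ is $\mathcal{F}$-projective in $\mathbf{PD}$, where $\mathcal F$ is the class of all flat substitutions of $\mathbf{PD}$.
   Context: Here $p^1:=p$, $p^0:=\neg p$, and a team on $V$ is a set of functions $V\to\{0,1\}$. A valuation is a function from the set Prop of propositional variables to $\{0,1\}$; a team is a set of valuations. Formulas of extended propositional dependence logic $\mathbf{PD}$: $\phi::=p\mid\bot\mid\top\mid\,=\!(\alpha_1,\dots,\alpha_k,\beta)\mid\neg\phi\mid\phi\wedge\phi\mid\phi\otimes\phi$ with $\alpha_i,\beta$ flat. Satisfaction on a team $X$: $X\models p$ iff $v(p)=1$ for all $v\in X$; $X\models\bot$ iff $X=\emptyset$; $X\models\top$ always; $\wedge$ conjunction; $X\models\phi\otimes\psi$ iff $X=Y\cup Z$ with $Y\models\phi$, $Z\models\psi$; $X\models\neg\phi$ iff $\{v\}\not\models\phi$ for all $v\in X$; $X\models\,=\!(\vec\alpha,\beta)$ iff for all $v,v'\in X$, if $\{v\}\models\alpha_i\Leftrightarrow\{v'\}\models\alpha_i$ for all $i$, then $\{v\}\models\beta\Leftrightarrow\{v'\}\models\beta$. $\phi$ is flat if for all teams $X$: $X\models\phi$ iff $\{v\}\models\phi$ for all $v\in X$. For finite $\Gamma$, $\Gamma\vdash_{\mathbf{PD}}\phi$ iff all formulas are $\mathbf{PD}$-formulas and every team satisfying all of $\Gamma$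 satisfies $\phi$. A substitution is a map on $\mathbf{PD}$-formulas commuting with all connectives and atoms; it is flat if each $\sigma(p)$ is flat. For a set $\mathcal S$ of substitutions, $\phi$ is $\mathcal S$-projective in $\mathbf{PD}$ if there is $\sigma\in\mathcal S$ with $\vdash_{\mathbf{PD}}\sigma(\phi)$, and $\phi,\sigma(p)\vdash_{\mathbf{PD}}p$ and $\phi,p\vdash_{\mathbf{PD}}\sigma(p)$ for all propositional variables $p$. *)

theory Defs
  imports Main
begin

datatype fml =
    Var nat
  | Bot
  | Top
  | Dep "fml list" fml
  | Neg fml
  | Conj fml fml
  | Tensor fml fml

type_synonym valuation = "nat \<Rightarrow> bool"
type_synonym team = "valuation set"

fun sat :: "team \<Rightarrow> fml \<Rightarrow> bool" where
  "sat X (Var p) = (\<forall>v\<in>X. v p)"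
| "sat X Bot = (X = {})"
| "sat X Top = True"
| "sat X (Dep as b) = (\<forall>v\<in>X. \<forall>v'\<in>X.
      (\<forall>a\<in>set as. sat {v} a = sat {v'} a) \<longrightarrow> (sat {v} b = sat {v'} b))"
| "sat X (Neg f) = (\<forall>v\<in>X. \<not> sat {v} f)"
| "sat X (Conj f g) = (sat X f \<and> sat X g)"
| "sat X (Tensor f g) = (\<exists>Y Z. X = Y \<union> Z \<and> sat Y f \<and> sat Z g)"

definition flat :: "fml \<Rightarrow> bool" where
  "flat f \<longleftrightarrow> (\<forall>X. sat X f = (\<forall>v\<in>X. sat {v} f))"

fun wf :: "fml \<Rightarrow> bool" where
  "wf (Var p) = True"
| "wf Bot = True"
| "wf Top = True"
| "wf (Dep as b) = ((\<forall>a\<in>set as. wf a \<and> flat a) \<and> wf b \<and> flat b)"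
| "wf (Neg f) = wf f"
| "wf (Conj f g) = (wf f \<and> wf g)"
| "wf (Tensor f g) = (wf f \<and> wf g)"

definition entails :: "fml list \<Rightarrow> fml \<Rightarrow> bool" where
  "entails \<Gamma> f \<longleftrightarrow> (\<forall>g\<in>set \<Gamma>. wf g) \<and> wf f \<and>
     (\<forall>X. (\<forall>g\<in>set \<Gamma>. sat X g) \<longrightarrow> sat X f)"

fun subst :: "(nat \<Rightarrow> fml) \<Rightarrow> fml \<Rightarrow> fml" where
  "subst s (Var p) = s p"
| "subst s Bot = Bot"
| "subst s Top = Top"
| "subst s (Dep as b) = Dep (map (subst s) as) (subst s b)"
| "subst s (Neg f) = Neg (subst s f)"
| "subst s (Conj f g) = Conj (subst s f) (subst s g)"
| "subst s (Tensor f g) = Tensor (subst s f) (subst s g)"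

definition is_subst :: "(nat \<Rightarrow> fml) \<Rightarrow> bool" where
  "is_subst s \<longleftrightarrow> (\<forall>f. wf f \<longrightarrow> wf (subst s f))"

definition flat_substs :: "(nat \<Rightarrow> fml) set" where
  "flat_substs = {s. is_subst s \<and> (\<forall>p. flat (s p))}"

definition projective :: "(nat \<Rightarrow> fml) set \<Rightarrow> fml \<Rightarrow> bool" where
  "projective S f \<longleftrightarrow> (\<exists>s\<in>S. entails [] (subst s f) \<and>
     (\<forall>p. entails [f, s p] (Var p) \<and> entails [f, Var p] (s p)))"

definition lit :: "nat \<Rightarrow> bool \<Rightarrow> fml" where
  "lit p b = (if b then Var p else Neg (Var p))"

fun conjs :: "fml list \<Rightarrow> fml" where
  "conjs [] = Top"
| "conjs [f] = f"
| "conjs (f # fs) = Conj f (conjs fs)"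

fun tensors :: "fml list \<Rightarrow> fml" where
  "tensors [] = Bot"
| "tensors [f] = f"
| "tensors (f # fs) = Tensor f (tensors fs)"

text \<open>\<Theta>_X for a team X on the variables ps, given as an enumeration xs of X.\<close>
definition Theta :: "nat list \<Rightarrow> valuation list \<Rightarrow> fml" where
  "Theta ps xs = tensors (map (\<lambda>v. conjs (map (\<lambda>p. lit p (v p)) ps)) xs)"

end

theory Submission
  imports Defs
begin

text \<open>A flat formula \<phi> true at some valuation v0 is projective via the flat substitution
  \<sigma>(p) = (\<phi> \<and> p) \<otimes> (\<not>\<phi> \<and> p^v0(p)): a valuation w is sent by \<sigma> to w itself where \<phi>
  holds and to v0 elsewhere, so \<sigma>(\<phi>) is valid, and under \<phi> each \<sigma>(p) agrees with p.
  The formula \<Theta>_X is flat and holds at every member of the nonempty team X.\<close>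

lemma sat_empty: "sat {} f"
  by (induction f) auto

text \<open>Never use flatD as an unrestricted rewrite rule: on singleton teams it loops.\<close>

lemma flatD: "flat f \<Longrightarrow> sat X f \<longleftrightarrow> (\<forall>v\<in>X. sat {v} f)"
  unfolding flat_def by blast

lemma flat_satD: "flat f \<Longrightarrow> sat X f \<Longrightarrow> v \<in> X \<Longrightarrow> sat {v} f"
  unfolding flat_def by blast

lemma flat_satI: "flat f \<Longrightarrow> (\<And>v. v \<in> X \<Longrightarrow> sat {v} f) \<Longrightarrow> sat X f"
  unfolding flat_def by blast

lemma flat_Var: "flat (Var p)"
  and flat_Top: "flat Top"
  and flat_Bot: "flat Bot"
  and flat_Neg: "flat (Neg f)"
  unfolding flat_def by auto

lemma flat_Conj: "flat f \<Longrightarrow> flat g \<Longrightarrow> flat (Conj f g)"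
  unfolding flat_def[of "Conj f g"] by (auto intro: flat_satI dest: flat_satD)

lemma sat_Tensor_flat:
  assumes "flat f" "flat g"
  shows "sat X (Tensor f g) \<longleftrightarrow> (\<forall>w\<in>X. sat {w} f \<or> sat {w} g)"
proof
  assume "sat X (Tensor f g)"
  then show "\<forall>w\<in>X. sat {w} f \<or> sat {w} g"
    using flat_satD[OF assms(1)] flat_satD[OF assms(2)] by auto
next
  assume cover: "\<forall>w\<in>X. sat {w} f \<or> sat {w} g"
  have "sat {w\<in>X. sat {w} f} f" "sat {w\<in>X. \<not> sat {w} f} g"
    using cover by (auto intro: flat_satI[OF assms(1)] flat_satI[OF assms(2)])
  moreover have "X = {w\<in>X. sat {w} f} \<union> {w\<in>X. \<not> sat {w} f}"
    by blast
  ultimately show "sat X (Tensor f g)"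
    by auto
qed

lemma flat_Tensor:
  assumes "flat f" "flat g"
  shows "flat (Tensor f g)"
  unfolding flat_def[of "Tensor f g"] sat_Tensor_flat[OF assms] by blast

lemma image_eq_UnE:
  assumes "f ` X = A \<union> B"
  obtains Y Z where "X = Y \<union> Z" "f ` Y = A" "f ` Z = B"
proof
  show "f ` (X \<inter> f -` A) = A" "f ` (X \<inter> f -` B) = B"
    using assms by force+
  have "f x \<in> A \<union> B" if "x \<in> X" for x
    using assms that by blast
  then show "X = (X \<inter> f -` A) \<union> (X \<inter> f -` B)"
    by auto
qed

definition induced_valuation :: "(nat \<Rightarrow> fml) \<Rightarrow> valuation \<Rightarrow> valuation" where
  "induced_valuation s w = (\<lambda>p. sat {w} (s p))"

lemma sat_subst:
  assumes flat_s: "\<And>p. flat (s p)"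
  shows "sat X (subst s f) \<longleftrightarrow> sat (induced_valuation s ` X) f"
proof (induction f arbitrary: X)
  case (Var p)
  show ?case
    by (simp add: flatD[OF flat_s, of X] induced_valuation_def)
next
  case (Dep as b)
  have "sat {v} (subst s a) \<longleftrightarrow> sat {induced_valuation s v} a" if "a \<in> set as" for a v
    using Dep.IH(1)[OF that, of "{v}"] by simp
  moreover have "sat {v} (subst s b) \<longleftrightarrow> sat {induced_valuation s v} b" for v
    using Dep.IH(2)[of "{v}"] by simp
  ultimately show ?case
    by simp
next
  case (Tensor f g)
  let ?u = "induced_valuation s"
  show ?case
  proof
    assume "sat X (subst s (Tensor f g))"
    then obtain Y Z where "X = Y \<union> Z" "sat Y (subst s f)" "sat Z (subst s g)"
      unfolding subst.simps sat.simps(7) by blast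
    then have "?u ` X = ?u ` Y \<union> ?u ` Z" "sat (?u ` Y) f" "sat (?u ` Z) g"
      using Tensor.IH by auto
    then show "sat (?u ` X) (Tensor f g)"
      unfolding sat.simps(7) by blast
  next
    assume "sat (?u ` X) (Tensor f g)"
    then obtain A B where "?u ` X = A \<union> B" "sat A f" "sat B g"
      unfolding sat.simps(7) by blast
    then obtain Y Z where "X = Y \<union> Z" "sat (?u ` Y) f" "sat (?u ` Z) g"
      by (metis image_eq_UnE)
    then show "sat X (subst s (Tensor f g))"
      using Tensor.IH unfolding subst.simps sat.simps(7) by blast
  qed
qed simp_all

lemma flat_subst:
  assumes flat_s: "\<And>p. flat (s p)" and "flat f"
  shows "flat (subst s f)"
  unfolding flat_def
proof
  fix X
  have "sat X (subst s f) \<longleftrightarrow> (\<forall>v\<in>X. sat {induced_valuation s v} f)"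
    using flatD[OF \<open>flat f\<close>, of "induced_valuation s ` X"] by (simp add: sat_subst[OF flat_s])
  then show "sat X (subst s f) \<longleftrightarrow> (\<forall>v\<in>X. sat {v} (subst s f))"
    by (simp add: sat_subst[OF flat_s])
qed

lemma is_subst_flat:
  assumes "\<And>p. wf (s p)" "\<And>p. flat (s p)"
  shows "is_subst s"
  unfolding is_subst_def
proof (intro allI impI)
  fix f
  show "wf f \<Longrightarrow> wf (subst s f)"
    by (induction f) (auto simp: assms(1) intro: flat_subst[OF assms(2)])
qed

lemma flat_projective:
  assumes "wf \<phi>" "flat \<phi>" "sat {v\<^sub>0} \<phi>"
  shows "projective flat_substs \<phi>"
proof -
  define s where
    "s p = Tensor (Conj \<phi> (Var p)) (Conj (Neg \<phi>) (if v\<^sub>0 p then Top else Bot))" for p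
  have flat_s: "flat (s p)" for p
    unfolding s_def using \<open>flat \<phi>\<close>
    by (simp add: flat_Tensor flat_Conj flat_Var flat_Neg flat_Top flat_Bot)
  have wf_s: "wf (s p)" for p
    unfolding s_def using \<open>wf \<phi>\<close> by simp
  have sat_s: "sat {w} (s p) \<longleftrightarrow> (if sat {w} \<phi> then w p else v\<^sub>0 p)" for w p
    unfolding s_def using \<open>flat \<phi>\<close>
    by (subst sat_Tensor_flat) (simp_all add: flat_Conj flat_Var flat_Neg flat_Top flat_Bot)
  have "is_subst s"
    by (intro is_subst_flat wf_s flat_s)
  then have "s \<in> flat_substs"
    unfolding flat_substs_def using flat_s by blast
  moreover have "entails [] (subst s \<phi>)"
  proof -
    have "induced_valuation s w = (if sat {w} \<phi> then w else v\<^sub>0)" for w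
      by (auto simp: induced_valuation_def sat_s)
    then have "sat X (subst s \<phi>)" for X
      unfolding sat_subst[OF flat_s] using \<open>sat {v\<^sub>0} \<phi>\<close>
      by (auto intro: flat_satI[OF \<open>flat \<phi>\<close>])
    moreover have "wf (subst s \<phi>)"
      using \<open>is_subst s\<close> \<open>wf \<phi>\<close> unfolding is_subst_def by blast
    ultimately show ?thesis
      unfolding entails_def by simp
  qed
  moreover have "sat X (s p) \<longleftrightarrow> sat X (Var p)" if "sat X \<phi>" for X p
  proof -
    have "sat {w} \<phi>" if "w \<in> X" for w
      using flat_satD[OF \<open>flat \<phi>\<close> \<open>sat X \<phi>\<close> that] .
    then show ?thesis
      using flatD[OF flat_s, of X] sat_s by auto
  qed
  then have "entails [\<phi>, s p] (Var p) \<and> entails [\<phi>, Var p] (s p)" for p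
    unfolding entails_def using \<open>wf \<phi>\<close> wf_s by auto
  ultimately show ?thesis
    unfolding projective_def by blast
qed

lemma sat_conjs: "sat X (conjs fs) \<longleftrightarrow> (\<forall>f\<in>set fs. sat X f)"
  by (induction fs rule: conjs.induct) auto

lemma flat_conjs: "\<forall>f\<in>set fs. flat f \<Longrightarrow> flat (conjs fs)"
  by (induction fs rule: conjs.induct) (auto simp: flat_Top flat_Conj)

lemma wf_conjs: "\<forall>f\<in>set fs. wf f \<Longrightarrow> wf (conjs fs)"
  by (induction fs rule: conjs.induct) auto

lemma sat_singleton_tensors: "f \<in> set fs \<Longrightarrow> sat {v} f \<Longrightarrow> sat {v} (tensors fs)"
proof (induction fs rule: tensors.induct)
  case (3 g h fs)
  show ?case
  proof (cases "f = g")
    case True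
    then have "{v} = {v} \<union> {} \<and> sat {v} g \<and> sat {} (tensors (h # fs))"
      using "3.prems"(2) sat_empty by simp
    then show ?thesis
      by auto
  next
    case False
    then have "{v} = {} \<union> {v} \<and> sat {} g \<and> sat {v} (tensors (h # fs))"
      using 3 sat_empty by simp
    then show ?thesis
      by auto
  qed
qed auto

lemma flat_tensors: "\<forall>f\<in>set fs. flat f \<Longrightarrow> flat (tensors fs)"
  by (induction fs rule: tensors.induct) (auto simp: flat_Bot flat_Tensor)

lemma wf_tensors: "\<forall>f\<in>set fs. wf f \<Longrightarrow> wf (tensors fs)"
  by (induction fs rule: tensors.induct) auto

lemma flat_lit: "flat (lit p b)"
  and wf_lit: "wf (lit p b)"
  and sat_lit: "sat {v} (lit p (v p))"
  by (simp_all add: lit_def flat_Var flat_Neg)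

theorem lemma4p5:
  fixes ps :: "nat list" and xs :: "valuation list"
  assumes "ps \<noteq> []" and "distinct ps"
    and "xs \<noteq> []" and "distinct xs"
    and "\<forall>v\<in>set xs. \<forall>p. p \<notin> set ps \<longrightarrow> \<not> v p"
  shows "projective flat_substs (Theta ps xs)"
proof -
  \<comment> \<open>only \<open>xs \<noteq> []\<close> is needed; the other hypotheses just say that xs enumerates a team on ps\<close>
  obtain v\<^sub>0 where "v\<^sub>0 \<in> set xs"
    using \<open>xs \<noteq> []\<close> by (cases xs) auto
  then have "sat {v\<^sub>0} (Theta ps xs)"
    unfolding Theta_def
    by (intro sat_singleton_tensors[where f = "conjs (map (\<lambda>p. lit p (v\<^sub>0 p)) ps)"])
      (simp_all add: sat_conjs sat_lit)
  moreover have "flat (Theta ps xs)" "wf (Theta ps xs)"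
    unfolding Theta_def
    by (simp_all add: flat_tensors flat_conjs flat_lit wf_tensors wf_conjs wf_lit)
  ultimately show ?thesis
    by (intro flat_projective)
qed

end
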